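(* Let $\mathcal M_1,\mathcal M_2$ and the relation $Z$ be as defined in the context. Then $Z$ is a CD-asimulation between $\mathcal M_1$ and $\mathcal M_2$.
   Context: Let $\mathbb N=\{0,1,2,\dots\}$ and for $k>0$, $l\ge0$ let $k\mathbb N+l=\{kn+l: n\in\mathbb N\}$, $k\mathbb N=k\mathbb N+0$. A quasi-partition is a triple $(A,B,C)$ of pairwise disjoint subsets of $\mathbb N$ with $A\cup B\cup C=\mathbb N$, $A$ and $C$ infinite, and $B$ either empty or infinite. Order quasi-partitions by $(A,B,C)\sqsubseteq(D,E,F)$ iff $A\subseteq D$ and $F\subseteq C$. Let $\mathbf v=(\mathbf v_1,\mathbf v_2,\mathbf v_3)=(3\mathbb N,3\mathbb N+1,3\mathbb N+2)$ and $\mathbf w=(2\mathbb N,\emptyset,2\mathbb N+1)$. A G-model is $\langle W,\le,v_0,D,\phi\rangle$ with $\le$ a reflexive transitive relation on the nonempty set $W$, base point $v_0\le v$ for all $v$, nonempty domain $D$, and for each $k$-ary predicate symbol a monotone set $\phi(P)\subseteq W\times D^k$ (if $v\le w$ and $\langle v,\vec a\rangle\in\phi(P)$ then $\langle w,\vec a\rangle\in\phi(P)$); atomic forcing: $v\Vdash P\vec{\mathbf a}$ iff $\langle v,\vec a\rangle\in\phi(P)$. $\mathcal M_1$: states $W_1$ = all quasi-partitions $(A,B,C)$ with $\mathbf v\sqsubseteq(A,B,C)$ and $B\cap\mathbf v_2$ infinite; base point $\mathbf v$. $\mathcal M_2$: states $W_2$ = all quasi-partitions $(A,B,C)$ with $\mathbf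 w\sqsubseteq(A,B,C)$ and $B\ne\emptyset$, together with $\mathbf w$; base point $\mathbf w$. In both, the order is $\sqsubseteq$, the domain is $\mathbb N$, and the only predicate symbols are unary $P,Q$ with: state $s=(s_1,s_2,s_3)$ forces $P\mathbf a$ iff $a\in s_1\cup s_2$, and forces $Q\mathbf a$ iff $a\in s_1$. $\Vdash_i$, $\le_i$ denote forcing and order in $\mathcal M_i$. For $\vec d,\vec e\in\mathbb N^k$, $[\vec d\mapsto\vec e]=\{\langle d_l,e_l\rangle:1\le l\le k\}$. Define $Z$: for $\{i,j\}=\{1,2\}$, $k\ge0$, $(A,B,C)\in W_i$, $\vec d\in\mathbb N^k$, $(D,E,F)\in W_j$, $\vec e\in\mathbb N^k$, we have $((A,B,C),\vec d)\,Z\,((D,E,F),\vec e)$ iff (a) $[\vec d\mapsto\vec e]$ is a bijection (from the set of entries of $\vec d$ to the set of entries of $\vec e$); (b) for $1\le l\le k$, $d_l\in A$ implies $e_l\in D$; (c) for $1\le l\le k$, $d_l\in B$ implies $e_l\in D\cup E$. No other pairs are in $Z$. A CD-asimulation between G-models $\mathcal M_1=\langle W_1,\le_1,\dots,D_1,\phi_1\rangle$ and $\mathcal M_2=\langle W_2,\le_2,\dots,D_2,\phi_2\rangle$ is a relation $Z\subseteq\bigcup_{k\ge0}[(W_1\times D_1^k)\times(W_2\times D_2^k)]\cup[(W_2\times D_2^k)\times(W_1\times D_1^k)]$ such that for all $\{i,j\}=\{1,2\}$: (1) if $(v,\vec d)Z(w,\vec e)$ with $v\in W_i$, and $v\Vdash_i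 P[\vec d]$ for an atomic formula $P[\vec x]$ with free variables among $x_1,\dots,x_k$, then $w\Vdash_j P[\vec e]$; (2) if $(t,\vec d)Z(u,\vec e)$ with $t\in W_i$, $u\in W_j$, and $u\le_j v$, then there is $w\in W_i$ with $t\le_i w$, $(w,\vec d)Z(v,\vec e)$ and $(v,\vec e)Z(w,\vec d)$; (3) if $t\in W_i$, $(t,\vec d)Z(u,\vec e)$ and $f\in D_i$, then there is $g\in D_j$ with $(t,\vec d f)Z(u,\vec e g)$; (4) if $t\in W_i$, $(t,\vec d)Z(u,\vec e)$ and $g\in D_j$, then there is $f\in D_i$ with $(t,\vec d f)Z(u,\vec e g)$, where $\vec d f$ is $\vec d$ extended by $f$. *)

theory Defs
  imports Main
begin

datatype psym = PP | QQ

fun arity :: "psym \<Rightarrow> nat" where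
  "arity PP = 1" | "arity QQ = 1"

text \<open>Atomic formulas: a predicate symbol applied to a list of variables;
  variable x_(l+1) is represented by the index l (0-based).\<close>
datatype atom = Atom psym "nat list"

definition atom_vars_below :: "atom \<Rightarrow> nat \<Rightarrow> bool" where
  "atom_vars_below a k = (case a of Atom p xs \<Rightarrow> length xs = arity p \<and> (\<forall>x\<in>set xs. x < k))"

record ('w, 'd) gmodel =
  W :: "'w set"
  le :: "'w \<Rightarrow> 'w \<Rightarrow> bool"
  base :: 'w
  dom :: "'d set"
  phi :: "psym \<Rightarrow> ('w \<times> 'd list) set"

definition forces_atom :: "('w, 'd) gmodel \<Rightarrow> 'w \<Rightarrow> 'd list \<Rightarrow> atom \<Rightarrow> bool" where
  "forces_atom M v ds a = (case a of Atom p xs \<Rightarrow> (v, map (\<lambda>x. ds ! x) xs) \<in> phi M p)"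

text \<open>A CD-asimulation is given by its two components:
  Zmn \<subseteq> (W_M \<times> D_M^k) \<times> (W_N \<times> D_N^k) and Znm the other direction.
  asim_dir states conditions (1)--(4) for the case where the left element lives in M.\<close>
definition asim_dir ::
  "('w1, 'd1) gmodel \<Rightarrow> ('w2, 'd2) gmodel \<Rightarrow>
   (('w1 \<times> 'd1 list) \<times> ('w2 \<times> 'd2 list)) set \<Rightarrow>
   (('w2 \<times> 'd2 list) \<times> ('w1 \<times> 'd1 list)) set \<Rightarrow> bool" where
  "asim_dir M N Zmn Znm \<longleftrightarrow>
     (\<forall>v d w e. ((v, d), (w, e)) \<in> Zmn \<longrightarrow>
        v \<in> W M \<and> set d \<subseteq> dom M \<and> w \<in> W N \<and> set e \<subseteq> dom N \<and> length d = length e) \<and>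
     (\<forall>v d w e a. ((v, d), (w, e)) \<in> Zmn \<longrightarrow> atom_vars_below a (length d) \<longrightarrow>
        forces_atom M v d a \<longrightarrow> forces_atom N w e a) \<and>
     (\<forall>t d u e v. ((t, d), (u, e)) \<in> Zmn \<longrightarrow> v \<in> W N \<longrightarrow> le N u v \<longrightarrow>
        (\<exists>w \<in> W M. le M t w \<and> ((w, d), (v, e)) \<in> Zmn \<and> ((v, e), (w, d)) \<in> Znm)) \<and>
     (\<forall>t d u e f. ((t, d), (u, e)) \<in> Zmn \<longrightarrow> f \<in> dom M \<longrightarrow>
        (\<exists>g \<in> dom N. ((t, d @ [f]), (u, e @ [g])) \<in> Zmn)) \<and>
     (\<forall>t d u e g. ((t, d), (u, e)) \<in> Zmn \<longrightarrow> g \<in> dom N \<longrightarrow>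
        (\<exists>f \<in> dom M. ((t, d @ [f]), (u, e @ [g])) \<in> Zmn))"

definition CD_asimulation ::
  "('w1, 'd1) gmodel \<Rightarrow> ('w2, 'd2) gmodel \<Rightarrow>
   (('w1 \<times> 'd1 list) \<times> ('w2 \<times> 'd2 list)) set \<Rightarrow>
   (('w2 \<times> 'd2 list) \<times> ('w1 \<times> 'd1 list)) set \<Rightarrow> bool" where
  "CD_asimulation M1 M2 Z12 Z21 \<longleftrightarrow> asim_dir M1 M2 Z12 Z21 \<and> asim_dir M2 M1 Z21 Z12"

type_synonym qpart = "nat set \<times> nat set \<times> nat set"

definition quasi_partition :: "qpart \<Rightarrow> bool" where
  "quasi_partition s = (case s of (A, B, C) \<Rightarrow>
     A \<inter> B = {} \<and> A \<inter> C = {} \<and> B \<inter> C = {} \<and> A \<union> B \<union> C = UNIV \<and>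
     infinite A \<and> infinite C \<and> (B = {} \<or> infinite B))"

definition qle :: "qpart \<Rightarrow> qpart \<Rightarrow> bool" where
  "qle s t = (case s of (A, B, C) \<Rightarrow> case t of (D, E, F) \<Rightarrow> A \<subseteq> D \<and> F \<subseteq> C)"

definition kN :: "nat \<Rightarrow> nat \<Rightarrow> nat set" where
  "kN k l = {k * n + l | n. True}"

definition vv :: qpart where "vv = (kN 3 0, kN 3 1, kN 3 2)"
definition ww :: qpart where "ww = (kN 2 0, {}, kN 2 1)"

definition W1 :: "qpart set" where
  "W1 = {(A, B, C). quasi_partition (A, B, C) \<and> qle vv (A, B, C) \<and> infinite (B \<inter> kN 3 1)}"

definition W2 :: "qpart set" where
  "W2 = {(A, B, C). quasi_partition (A, B, C) \<and> qle ww (A, B, C) \<and> B \<noteq> {}} \<union> {ww}"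

definition phiPQ :: "qpart set \<Rightarrow> psym \<Rightarrow> (qpart \<times> nat list) set" where
  "phiPQ Ws p = {(s, [a]) | s a. s \<in> Ws \<and>
     (case s of (A, B, C) \<Rightarrow> (case p of PP \<Rightarrow> a \<in> A \<union> B | QQ \<Rightarrow> a \<in> A))}"

definition M1 :: "(qpart, nat) gmodel" where
  "M1 = \<lparr>W = W1, le = qle, base = vv, dom = UNIV, phi = phiPQ W1\<rparr>"

definition M2 :: "(qpart, nat) gmodel" where
  "M2 = \<lparr>W = W2, le = qle, base = ww, dom = UNIV, phi = phiPQ W2\<rparr>"

definition map_rel :: "nat list \<Rightarrow> nat list \<Rightarrow> (nat \<times> nat) set" where
  "map_rel d e = {(d ! l, e ! l) | l. l < length d}"

definition is_bijection :: "(nat \<times> nat) set \<Rightarrow> nat set \<Rightarrow> nat set \<Rightarrow> bool" where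
  "is_bijection R X Y \<longleftrightarrow> R \<subseteq> X \<times> Y \<and>
     (\<forall>x\<in>X. \<exists>!y. (x, y) \<in> R) \<and> (\<forall>y\<in>Y. \<exists>!x. (x, y) \<in> R)"

definition Zcond :: "qpart \<Rightarrow> nat list \<Rightarrow> qpart \<Rightarrow> nat list \<Rightarrow> bool" where
  "Zcond s d t e = (case s of (A, B, C) \<Rightarrow> case t of (D, E, F) \<Rightarrow>
     length d = length e \<and>
     is_bijection (map_rel d e) (set d) (set e) \<and>
     (\<forall>l < length d. d ! l \<in> A \<longrightarrow> e ! l \<in> D) \<and>
     (\<forall>l < length d. d ! l \<in> B \<longrightarrow> e ! l \<in> D \<union> E))"

definition Z12 :: "((qpart \<times> nat list) \<times> (qpart \<times> nat list)) set" where
  "Z12 = {((s, d), (t, e)). s \<in> W1 \<and> t \<in> W2 \<and> Zcond s d t e}"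

definition Z21 :: "((qpart \<times> nat list) \<times> (qpart \<times> nat list)) set" where
  "Z21 = {((s, d), (t, e)). s \<in> W2 \<and> t \<in> W1 \<and> Zcond s d t e}"

end

theory Submission imports Defs begin

text \<open>
  Z only remembers the equality pattern of the tuples and, position by position, that
  membership in the first (resp. first two) components is preserved. Conditions (3) and (4)
  are met by choosing a fresh element of the infinite first component of the target state
  (resp. third component of the source state). For condition (2), given t Z u and u \<sqsubseteq> v,
  one grafts the tuple d into a suitable refinement b of t: every entry d_l is sent to the
  component of v that contains e_l, all other points stay where b has them. Because b has
  infinite middle component, the result is again a quasi-partition with nonempty middle,
  and it lies above t because u already sits below v.
\<close>

definition same_pattern :: "nat list \<Rightarrow> nat list \<Rightarrow> bool" where
  "same_pattern d e \<longleftrightarrow> length d = length e \<and>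
     (\<forall>l<length d. \<forall>l'<length d. d ! l = d ! l' \<longleftrightarrow> e ! l = e ! l')"

lemma same_pattern_sym: "same_pattern d e \<Longrightarrow> same_pattern e d"
  unfolding same_pattern_def by auto

lemma same_pattern_snoc:
  assumes "same_pattern d e" and "\<And>l. l < length d \<Longrightarrow> d ! l = f \<longleftrightarrow> e ! l = g"
  shows "same_pattern (d @ [f]) (e @ [g])"
  unfolding same_pattern_def
proof (intro conjI allI impI)
  show "length (d @ [f]) = length (e @ [g])" using assms(1) by (simp add: same_pattern_def)
next
  fix l l' assume "l < length (d @ [f])" "l' < length (d @ [f])"
  then consider "l < length d" "l' < length d" | "l < length d" "l' = length d"
    | "l = length d" "l' < length d" | "l = length d" "l' = length d" by fastforce
  then show "(d @ [f]) ! l = (d @ [f]) ! l' \<longleftrightarrow> (e @ [g]) ! l = (e @ [g]) ! l'"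
    by cases (use assms in \<open>auto simp: same_pattern_def nth_append\<close>)
qed

lemma is_bijection_map_rel_iff:
  assumes "length d = length e"
  shows "is_bijection (map_rel d e) (set d) (set e) \<longleftrightarrow> same_pattern d e"
proof
  assume b: "is_bijection (map_rel d e) (set d) (set e)"
  have "d ! l = d ! l' \<longleftrightarrow> e ! l = e ! l'" if l: "l < length d" "l' < length d" for l l'
  proof
    assume "d ! l = d ! l'"
    moreover have "(d ! l, e ! l) \<in> map_rel d e" "(d ! l', e ! l') \<in> map_rel d e"
      using l unfolding map_rel_def by auto
    ultimately show "e ! l = e ! l'" using b l unfolding is_bijection_def by (metis nth_mem)
  next
    assume "e ! l = e ! l'"
    moreover have "(d ! l, e ! l) \<in> map_rel d e" "(d ! l', e ! l') \<in> map_rel d e"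
      using l unfolding map_rel_def by auto
    ultimately show "d ! l = d ! l'" using b l assms unfolding is_bijection_def by (metis nth_mem)
  qed
  then show "same_pattern d e" using assms by (simp add: same_pattern_def)
next
  assume p: "same_pattern d e"
  have R: "(x, y) \<in> map_rel d e \<longleftrightarrow> (\<exists>l<length d. x = d ! l \<and> y = e ! l)" for x y
    unfolding map_rel_def by auto
  show "is_bijection (map_rel d e) (set d) (set e)"
    unfolding is_bijection_def
  proof (intro conjI ballI)
    show "map_rel d e \<subseteq> set d \<times> set e" using assms by (auto simp: R)
  next
    fix x assume "x \<in> set d"
    then obtain l where "l < length d" "x = d ! l" by (auto simp: in_set_conv_nth)
    then show "\<exists>!y. (x, y) \<in> map_rel d e" using p by (auto simp: R same_pattern_def)
  next
    fix y assume "y \<in> set e"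
    then obtain l where "l < length d" "y = e ! l" using assms by (auto simp: in_set_conv_nth)
    then show "\<exists>!x. (x, y) \<in> map_rel d e" using p by (auto simp: R same_pattern_def)
  qed
qed

lemma Zcond_iff:
  "Zcond (A, B, C) d (D, E, F) e \<longleftrightarrow> same_pattern d e \<and>
     (\<forall>l<length d. d ! l \<in> A \<longrightarrow> e ! l \<in> D) \<and>
     (\<forall>l<length d. d ! l \<in> B \<longrightarrow> e ! l \<in> D \<union> E)"
  unfolding Zcond_def using is_bijection_map_rel_iff
  by (auto simp: same_pattern_def)

lemma Zcond_snoc:
  assumes "Zcond (A, B, C) d (D, E, F) e"
    and "\<And>l. l < length d \<Longrightarrow> d ! l = f \<longleftrightarrow> e ! l = g"
    and "f \<in> A \<Longrightarrow> g \<in> D" and "f \<in> B \<Longrightarrow> g \<in> D \<union> E"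
  shows "Zcond (A, B, C) (d @ [f]) (D, E, F) (e @ [g])"
proof -
  have p: "same_pattern d e"
    and ZA: "\<forall>l<length d. d ! l \<in> A \<longrightarrow> e ! l \<in> D"
    and ZB: "\<forall>l<length d. d ! l \<in> B \<longrightarrow> e ! l \<in> D \<union> E"
    using assms(1) by (auto simp: Zcond_iff)
  have len: "length d = length e" using p by (simp add: same_pattern_def)
  have "l < length (d @ [f]) \<Longrightarrow> l < length d \<or> l = length d" for l by auto
  then show ?thesis
    using same_pattern_snoc[OF p assms(2)] ZA ZB assms(3,4) len
    by (auto simp: Zcond_iff nth_append)
qed

lemma Zcond_extend_right:
  assumes Z: "Zcond (A, B, C) d (D, E, F) e" and "infinite D"
  shows "\<exists>g. Zcond (A, B, C) (d @ [f]) (D, E, F) (e @ [g])"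
proof -
  have p: "same_pattern d e" using Z by (simp add: Zcond_iff)
  show ?thesis
  proof (cases "f \<in> set d")
    case True
    then obtain k where k: "k < length d" "f = d ! k" by (auto simp: in_set_conv_nth)
    have "Zcond (A, B, C) (d @ [f]) (D, E, F) (e @ [e ! k])"
      by (rule Zcond_snoc[OF Z]) (use k p Z in \<open>auto simp: same_pattern_def Zcond_iff\<close>)
    then show ?thesis ..
  next
    case False
    obtain g where g: "g \<in> D" "g \<notin> set e"
      using Diff_infinite_finite[OF finite_set \<open>infinite D\<close>] by (metis Diff_iff ex_in_conv infinite_imp_nonempty)
    have "Zcond (A, B, C) (d @ [f]) (D, E, F) (e @ [g])"
      by (rule Zcond_snoc[OF Z]) (use g False p in \<open>auto simp: same_pattern_def\<close>)
    then show ?thesis ..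
  qed
qed

lemma Zcond_extend_left:
  assumes Z: "Zcond (A, B, C) d (D, E, F) e" and "infinite C"
    and "A \<inter> C = {}" and "B \<inter> C = {}"
  shows "\<exists>f. Zcond (A, B, C) (d @ [f]) (D, E, F) (e @ [g])"
proof -
  have p: "same_pattern d e" using Z by (simp add: Zcond_iff)
  show ?thesis
  proof (cases "g \<in> set e")
    case True
    then obtain k where k: "k < length d" "g = e ! k"
      using p by (auto simp: in_set_conv_nth same_pattern_def)
    have "Zcond (A, B, C) (d @ [d ! k]) (D, E, F) (e @ [g])"
      by (rule Zcond_snoc[OF Z]) (use k p Z in \<open>auto simp: same_pattern_def Zcond_iff\<close>)
    then show ?thesis ..
  next
    case False
    obtain f where f: "f \<in> C" "f \<notin> set d"
      using Diff_infinite_finite[OF finite_set \<open>infinite C\<close>] by (metis Diff_iff ex_in_conv infinite_imp_nonempty)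
    have "Zcond (A, B, C) (d @ [f]) (D, E, F) (e @ [g])"
      by (rule Zcond_snoc[OF Z]) (use f False p assms(3,4) in \<open>auto simp: same_pattern_def\<close>)
    then show ?thesis ..
  qed
qed

definition graft :: "nat list \<Rightarrow> nat list \<Rightarrow> nat set \<Rightarrow> nat set \<Rightarrow> nat set" where
  "graft d e V X = {x. if x \<in> set d then \<exists>l<length d. d ! l = x \<and> e ! l \<in> V else x \<in> X}"

lemma graft_nth:
  "same_pattern d e \<Longrightarrow> l < length d \<Longrightarrow> d ! l \<in> graft d e V X \<longleftrightarrow> e ! l \<in> V"
  unfolding graft_def same_pattern_def by auto

lemma graft_notin: "x \<notin> set d \<Longrightarrow> x \<in> graft d e V X \<longleftrightarrow> x \<in> X"
  unfolding graft_def by auto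

lemma graft_cases [case_names entry other]:
  assumes "\<And>l. l < length d \<Longrightarrow> x = d ! l \<Longrightarrow> P" and "x \<notin> set d \<Longrightarrow> P"
  shows P
  using assms by (metis in_set_conv_nth)

lemma quasi_partition_graft:
  assumes p: "same_pattern d e"
    and v: "quasi_partition (v1, v2, v3)" and b: "quasi_partition (b1, b2, b3)"
    and "infinite b2"
  shows "quasi_partition (graft d e v1 b1, graft d e v2 b2, graft d e v3 b3)"
    (is "quasi_partition (?w1, ?w2, ?w3)")
proof -
  have "x \<notin> ?w1 \<inter> ?w2 \<and> x \<notin> ?w1 \<inter> ?w3 \<and> x \<notin> ?w2 \<inter> ?w3 \<and> x \<in> ?w1 \<union> ?w2 \<union> ?w3" for x
  proof (cases x d rule: graft_cases)
    case (entry l)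
    then show ?thesis using v by (auto simp: graft_nth[OF p] quasi_partition_def)
  next
    case other
    then show ?thesis using b by (auto simp: graft_notin quasi_partition_def)
  qed
  moreover have "infinite (graft d e V X)" if "infinite X" for V X
    using that graft_notin[of _ d e V X]
    by (metis (no_types, lifting) Diff_iff Diff_infinite_finite finite_set infinite_super subsetI)
  ultimately show ?thesis
    using b \<open>infinite b2\<close> unfolding quasi_partition_def by auto
qed

lemma qle_graft:
  assumes Z: "Zcond (a1, a2, a3) d (c1, c2, c3) e" and cv: "qle (c1, c2, c3) (v1, v2, v3)"
    and ab: "qle (a1, a2, a3) (b1, b2, b3)"
    and a: "quasi_partition (a1, a2, a3)" and c: "quasi_partition (c1, c2, c3)"
  shows "qle (a1, a2, a3) (graft d e v1 b1, graft d e v2 b2, graft d e v3 b3)"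
proof -
  have p: "same_pattern d e"
    and ZA: "\<forall>l<length d. d ! l \<in> a1 \<longrightarrow> e ! l \<in> c1"
    and ZB: "\<forall>l<length d. d ! l \<in> a2 \<longrightarrow> e ! l \<in> c1 \<union> c2"
    using Z by (auto simp: Zcond_iff)
  have up: "x \<in> graft d e v1 b1" if "x \<in> a1" for x
  proof (cases x d rule: graft_cases)
    case (entry l)
    then show ?thesis using that ZA cv by (auto simp: graft_nth[OF p] qle_def)
  next
    case other
    then show ?thesis using that ab by (auto simp: graft_notin qle_def)
  qed
  have down: "x \<in> a3" if "x \<in> graft d e v3 b3" for x
  proof (cases x d rule: graft_cases)
    case (entry l)
    with that cv have "e ! l \<in> c3" by (auto simp: graft_nth[OF p] qle_def)
    then show ?thesis
      using entry ZA ZB a c unfolding quasi_partition_def by blast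
  next
    case other
    then show ?thesis using that ab by (auto simp: graft_notin qle_def)
  qed
  show ?thesis using up down by (auto simp: qle_def)
qed

lemma Zcond_graft:
  assumes "same_pattern d e"
  shows "Zcond (graft d e v1 b1, graft d e v2 b2, graft d e v3 b3) d (v1, v2, v3) e"
    and "Zcond (v1, v2, v3) e (graft d e v1 b1, graft d e v2 b2, graft d e v3 b3) d"
  using assms same_pattern_sym[OF assms]
  by (auto simp: Zcond_iff graft_nth same_pattern_def)

lemma kN_iff: "l < k \<Longrightarrow> x \<in> kN k l \<longleftrightarrow> x mod k = l"
  unfolding kN_def by (auto, metis div_mult_mod_eq add.commute mult.commute)

lemma infinite_kN: "k > 0 \<Longrightarrow> infinite (kN k l)"
proof
  assume "k > 0" and "finite (kN k l)"
  moreover have "kN k l = range (\<lambda>n. k * n + l)" unfolding kN_def by auto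
  moreover have "inj (\<lambda>n. k * n + l)" using \<open>k > 0\<close> by (auto simp: inj_def)
  ultimately show False using finite_imageD by fastforce
qed

lemma quasi_partition_ww: "quasi_partition ww"
  unfolding ww_def quasi_partition_def using infinite_kN[of 2] by (auto simp: kN_iff)

lemma qle_refl: "qle s s"
  unfolding qle_def by (auto split: prod.splits)

lemma qle_trans: "qle a b \<Longrightarrow> qle b c \<Longrightarrow> qle a c"
  unfolding qle_def by (auto split: prod.splits)

lemma quasi_partition_W1: "s \<in> W1 \<Longrightarrow> quasi_partition s"
  unfolding W1_def by auto

lemma quasi_partition_W2: "s \<in> W2 \<Longrightarrow> quasi_partition s"
  unfolding W2_def using quasi_partition_ww by auto

lemma back_step_W1:
  assumes "t \<in> W1" "u \<in> W2" "v \<in> W2" "qle u v" "Zcond t d u e"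
  shows "\<exists>w\<in>W1. qle t w \<and> Zcond w d v e \<and> Zcond v e w d"
proof -
  obtain a1 a2 a3 where t: "t = (a1, a2, a3)" by (cases t)
  obtain c1 c2 c3 where u: "u = (c1, c2, c3)" by (cases u)
  obtain v1 v2 v3 where v: "v = (v1, v2, v3)" by (cases v)
  have a: "quasi_partition (a1, a2, a3)" and "qle vv t" and inf: "infinite (a2 \<inter> kN 3 1)"
    using assms(1) unfolding W1_def t by auto
  then have "infinite a2" by (meson finite_Int)
  have p: "same_pattern d e" using assms(5) unfolding t u by (simp add: Zcond_iff)
  define w where "w = (graft d e v1 a1, graft d e v2 a2, graft d e v3 a3)"
  have "quasi_partition w"
    unfolding w_def using quasi_partition_graft[OF p _ a] quasi_partition_W2[OF assms(3)] \<open>infinite a2\<close>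
    by (simp add: v)
  moreover have "qle t w"
    unfolding w_def t using qle_graft[OF _ _ qle_refl a] assms quasi_partition_W2
    by (simp add: u v t)
  moreover have "(a2 \<inter> kN 3 1) - set d \<subseteq> graft d e v2 a2 \<inter> kN 3 1"
    by (auto simp: graft_notin)
  then have "infinite (graft d e v2 a2 \<inter> kN 3 1)"
    using inf by (meson Diff_infinite_finite finite_set infinite_super)
  ultimately have "w \<in> W1"
    using qle_trans[OF \<open>qle vv t\<close>] by (auto simp: W1_def w_def)
  then show ?thesis
    using \<open>qle t w\<close> Zcond_graft[OF p] unfolding w_def v by blast
qed

lemma back_step_W2:
  assumes "t \<in> W2" "u \<in> W1" "v \<in> W1" "qle u v" "Zcond t d u e"
  shows "\<exists>w\<in>W2. qle t w \<and> Zcond w d v e \<and> Zcond v e w d"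
proof -
  obtain a1 a2 a3 where t: "t = (a1, a2, a3)" by (cases t)
  obtain c1 c2 c3 where u: "u = (c1, c2, c3)" by (cases u)
  obtain v1 v2 v3 where v: "v = (v1, v2, v3)" by (cases v)
  have a: "quasi_partition (a1, a2, a3)" using quasi_partition_W2 assms(1) t by simp
  have "qle ww t" using assms(1) qle_refl[of ww] unfolding W2_def by auto
  have p: "same_pattern d e" using assms(5) unfolding t u by (simp add: Zcond_iff)
  txt \<open>The base point ww has empty middle, so it is first refined by splitting its odd part.\<close>
  obtain b1 b2 b3 where b: "quasi_partition (b1, b2, b3)" "infinite b2" "qle t (b1, b2, b3)"
  proof (cases "t = ww")
    case True
    have "quasi_partition (kN 2 0, kN 4 1, kN 4 3)"
      unfolding quasi_partition_def using infinite_kN[of 2 0] infinite_kN[of 4 3] infinite_kN[of 4 1]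
      by (auto simp: kN_iff) presburger+
    moreover have "qle t (kN 2 0, kN 4 1, kN 4 3)"
      using True unfolding ww_def qle_def by (auto simp: kN_iff) presburger
    ultimately show ?thesis using that infinite_kN[of 4 1] by simp
  next
    case False
    then have "a2 \<noteq> {}" using assms(1) t unfolding W2_def by auto
    then have "infinite a2" using a unfolding quasi_partition_def by auto
    then show ?thesis using that a qle_refl t by blast
  qed
  define w where "w = (graft d e v1 b1, graft d e v2 b2, graft d e v3 b3)"
  have "quasi_partition w"
    unfolding w_def using quasi_partition_graft[OF p _ b(1,2)] quasi_partition_W1[OF assms(3)]
    by (simp add: v)
  moreover have "qle t w"
    unfolding w_def t using qle_graft[OF _ _ _ a] b(3) assms quasi_partition_W1
    by (simp add: u v t)
  moreover have "b2 - set d \<subseteq> graft d e v2 b2" by (auto simp: graft_notin)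
  then have "graft d e v2 b2 \<noteq> {}"
    using b(2) by (metis Diff_infinite_finite finite.emptyI finite_set finite_subset)
  ultimately have "w \<in> W2"
    using qle_trans[OF \<open>qle ww t\<close>] by (auto simp: W2_def w_def)
  then show ?thesis
    using \<open>qle t w\<close> Zcond_graft[OF p] unfolding w_def v by blast
qed

lemma forces_atom_phiPQ:
  assumes "phi M = phiPQ Wa" "phi N = phiPQ Wb" "w \<in> Wb"
    and Z: "Zcond v d w e" and "atom_vars_below a (length d)" and "forces_atom M v d a"
  shows "forces_atom N w e a"
proof -
  obtain p xs where a: "a = Atom p xs" by (cases a)
  obtain x where xs: "xs = [x]" "x < length d"
    using assms(5) a by (cases p; cases xs) (auto simp: atom_vars_below_def)
  obtain A B C where v: "v = (A, B, C)" by (cases v)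
  obtain D E F where w: "w = (D, E, F)" by (cases w)
  have "d ! x \<in> A \<Longrightarrow> e ! x \<in> D" and "d ! x \<in> B \<Longrightarrow> e ! x \<in> D \<union> E"
    using Z xs(2) unfolding v w Zcond_iff by auto
  then show ?thesis
    using assms(1-3,6) unfolding forces_atom_def a xs phiPQ_def v w
    by (cases p) auto
qed

lemma asim_dir_PQ_models:
  assumes M: "W M = Wa" "le M = qle" "dom M = UNIV" "phi M = phiPQ Wa"
    and N: "W N = Wb" "le N = qle" "dom N = UNIV" "phi N = phiPQ Wb"
    and Zmn: "Zmn = {((s, d), (t, e)). s \<in> Wa \<and> t \<in> Wb \<and> Zcond s d t e}"
    and Znm: "Znm = {((s, d), (t, e)). s \<in> Wb \<and> t \<in> Wa \<and> Zcond s d t e}"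
    and qpa: "\<And>s. s \<in> Wa \<Longrightarrow> quasi_partition s"
    and qpb: "\<And>s. s \<in> Wb \<Longrightarrow> quasi_partition s"
    and back_step: "\<And>t d u e v. t \<in> Wa \<Longrightarrow> u \<in> Wb \<Longrightarrow> v \<in> Wb \<Longrightarrow> qle u v \<Longrightarrow> Zcond t d u e
       \<Longrightarrow> \<exists>w\<in>Wa. qle t w \<and> Zcond w d v e \<and> Zcond v e w d"
  shows "asim_dir M N Zmn Znm"
  unfolding asim_dir_def
proof (intro conjI; intro allI impI)
  fix v d w e assume "((v, d), w, e) \<in> Zmn"
  moreover from this have "length d = length e"
    using Zmn by (cases v; cases w) (auto simp: Zcond_iff same_pattern_def)
  ultimately show "v \<in> W M \<and> set d \<subseteq> dom M \<and> w \<in> W N \<and> set e \<subseteq> dom N \<and> length d = length e"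
    using M N Zmn by auto
next
  fix v d w e a assume "((v, d), w, e) \<in> Zmn" "atom_vars_below a (length d)" "forces_atom M v d a"
  then show "forces_atom N w e a" using Zmn by (intro forces_atom_phiPQ[OF M(4) N(4)]) auto
next
  fix t d u e v assume "((t, d), u, e) \<in> Zmn" "v \<in> W N" "le N u v"
  then show "\<exists>w\<in>W M. le M t w \<and> ((w, d), v, e) \<in> Zmn \<and> ((v, e), w, d) \<in> Znm"
    using back_step[of t u v d e] M N Zmn Znm by auto
next
  fix t d u e f assume Z: "((t, d), u, e) \<in> Zmn"
  obtain D E F where u: "u = (D, E, F)" by (cases u)
  have "quasi_partition u" using Z Zmn qpb by auto
  then have "infinite D" unfolding u quasi_partition_def by auto
  then obtain g where "Zcond t (d @ [f]) u (e @ [g])"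
    using Zcond_extend_right Z Zmn unfolding u by (cases t) blast
  then show "\<exists>g\<in>dom N. ((t, d @ [f]), u, e @ [g]) \<in> Zmn" using Z N Zmn by auto
next
  fix t d u e g assume Z: "((t, d), u, e) \<in> Zmn"
  obtain A B C where t: "t = (A, B, C)" by (cases t)
  have "quasi_partition t" using Z Zmn qpa by auto
  then have "infinite C" "A \<inter> C = {}" "B \<inter> C = {}"
    unfolding t quasi_partition_def by auto
  then obtain f where "Zcond t (d @ [f]) u (e @ [g])"
    using Zcond_extend_left Z Zmn unfolding t by (cases u) blast
  then show "\<exists>f\<in>dom M. ((t, d @ [f]), u, e @ [g]) \<in> Zmn" using Z M Zmn by auto
qed

theorem lemma5p2:
  shows "CD_asimulation M1 M2 Z12 Z21"
  unfolding CD_asimulation_def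
proof
  show "asim_dir M1 M2 Z12 Z21"
    by (rule asim_dir_PQ_models[where Wa = W1 and Wb = W2])
      (auto simp: M1_def M2_def Z12_def Z21_def quasi_partition_W1 quasi_partition_W2 back_step_W1)
  show "asim_dir M2 M1 Z21 Z12"
    by (rule asim_dir_PQ_models[where Wa = W2 and Wb = W1])
      (auto simp: M1_def M2_def Z12_def Z21_def quasi_partition_W1 quasi_partition_W2 back_step_W2)
qed

end
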